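(* Let $\mathcal N_1$ be the network with nodes $\sigma_1,\sigma_2,v,\rho$, source set $S=\{\sigma_1,\sigma_2\}$, sink $\rho$, and five edges: two parallel edges from $\sigma_1$ to $v$, one edge from $\sigma_2$ to $v$, one edge from $\sigma_2$ to $\rho$, and one edge from $v$ to $\rho$. Let $f(m_1,m_2)=m_1+m_2$ over $\mathbb F_2$. Then $\widehat{\mathcal C}(\mathcal N_1,f,1)=1=\min_{i}\mathrm{mincut}(\sigma_i,\rho)$; in particular there is an admissible $(1,1)$ secure network code for $(\mathcal N_1,f,1)$.
   Context: $\mathrm{mincut}(u,v)$ is the minimum size of an edge set whose deletion leaves no path from node $u$ to node $v$. For a nonnegative integer $r$, $\mathcal W_r=\{W\subseteq\mathcal E:|W|\le r\}$. Secure model for a network $\mathcal N=(\mathcal G,S,\rho)$ ($\mathcal G=(\mathcal V,\mathcal E)$ directed acyclic, sources without input edges, sink without output edges), $q$ a prime power, $f=\sum_i m_i$ over $\mathbb F_q$, each edge carrying one symbol of $\mathbb F_q$ per use: an $(\ell,n)$ secure network code has source messages $\mathbf M_i\in\mathbb F_q^\ell$ (i.i.d. uniform entries) and keys $\mathbf K_i$ uniform on finite sets $\mathcal K_i$, all mutually independent; each edge out of $\sigma_i$ carries a function of $(\mathbf M_i,\mathbf K_i)$ in $\mathbb F_q^n$, every other edge carries a function in $\mathbb F_q^n$ of the messages on the input edges of its tail; a decoder at $\rho$ maps the incoming messages to $\mathbb F_q^\ell$. Admissible (for security level $r$): decoder outputs $\sum_i\mathbf m_i$ for all messages and keys, and $I(\mathbf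 Y_W;\mathbf M_S)=0$ for all $W\in\mathcal W_r$ ($\mathbf Y_W$ the messages on edges of $W$, $\mathbf M_S=(\mathbf M_1,\dots,\mathbf M_s)$). Rate $\ell/n$; $R$ achievable if for all $\epsilon>0$ some admissible code has rate $>R-\epsilon$; $\widehat{\mathcal C}(\mathcal N,f,r)$ is the maximum achievable rate. *)

theory Defs
  imports Complex_Main "HOL-Library.Z2"
begin

datatype node = Sigma1 | Sigma2 | V | Rho
datatype edge = E1 | E2 | E3 | E4 | E5

fun tl_e :: "edge \<Rightarrow> node" where
  "tl_e E1 = Sigma1" | "tl_e E2 = Sigma1" | "tl_e E3 = Sigma2"
| "tl_e E4 = Sigma2" | "tl_e E5 = V"

fun hd_e :: "edge \<Rightarrow> node" where
  "hd_e E1 = V" | "hd_e E2 = V" | "hd_e E3 = V"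
| "hd_e E4 = Rho" | "hd_e E5 = Rho"

definition step_without :: "edge set \<Rightarrow> (node \<times> node) set" where
  "step_without C = {(tl_e e, hd_e e) | e. e \<notin> C}"

definition mincut :: "node \<Rightarrow> node \<Rightarrow> nat" where
  "mincut u w = (LEAST k. \<exists>C :: edge set. card C = k \<and> (u, w) \<notin> (step_without C)\<^sup>*)"

text \<open>F_2^l is represented by functions nat => bit vanishing outside {0..<l}.\<close>
definition vecs :: "nat \<Rightarrow> (nat \<Rightarrow> bit) set" where
  "vecs l = {x. \<forall>i\<ge>l. x i = 0}"

text \<open>A code: block lengths l (message length) and n (symbols per edge), key sets K1, K2
(finite, nonempty, keys drawn uniformly; wlog subsets of nat), local encoders
enc1, enc2 (edges out of sigma1, functions of (M1,K1)), enc3, enc4 (edges out of sigma2,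
functions of (M2,K2)), enc5 (edge out of v, function of the messages on E1,E2,E3),
and the decoder dec at rho (function of the messages on E4,E5).\<close>

record code =
  len_l :: nat
  len_n :: nat
  keys1 :: "nat set"
  keys2 :: "nat set"
  enc1 :: "(nat \<Rightarrow> bit) \<Rightarrow> nat \<Rightarrow> (nat \<Rightarrow> bit)"
  enc2 :: "(nat \<Rightarrow> bit) \<Rightarrow> nat \<Rightarrow> (nat \<Rightarrow> bit)"
  enc3 :: "(nat \<Rightarrow> bit) \<Rightarrow> nat \<Rightarrow> (nat \<Rightarrow> bit)"
  enc4 :: "(nat \<Rightarrow> bit) \<Rightarrow> nat \<Rightarrow> (nat \<Rightarrow> bit)"
  enc5 :: "(nat \<Rightarrow> bit) \<Rightarrow> (nat \<Rightarrow> bit) \<Rightarrow> (nat \<Rightarrow> bit) \<Rightarrow> (nat \<Rightarrow> bit)"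
  dec :: "(nat \<Rightarrow> bit) \<Rightarrow> (nat \<Rightarrow> bit) \<Rightarrow> (nat \<Rightarrow> bit)"

definition omega :: "code \<Rightarrow> ((nat \<Rightarrow> bit) \<times> (nat \<Rightarrow> bit) \<times> nat \<times> nat) set" where
  "omega c = vecs (len_l c) \<times> vecs (len_l c) \<times> keys1 c \<times> keys2 c"

fun edge_msg :: "code \<Rightarrow> (nat \<Rightarrow> bit) \<times> (nat \<Rightarrow> bit) \<times> nat \<times> nat \<Rightarrow> edge \<Rightarrow> (nat \<Rightarrow> bit)" where
  "edge_msg c (m1, m2, k1, k2) E1 = enc1 c m1 k1"
| "edge_msg c (m1, m2, k1, k2) E2 = enc2 c m1 k1"
| "edge_msg c (m1, m2, k1, k2) E3 = enc3 c m2 k2"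
| "edge_msg c (m1, m2, k1, k2) E4 = enc4 c m2 k2"
| "edge_msg c (m1, m2, k1, k2) E5 =
     enc5 c (enc1 c m1 k1) (enc2 c m1 k1) (enc3 c m2 k2)"

definition Y_W :: "code \<Rightarrow> edge set \<Rightarrow> (nat \<Rightarrow> bit) \<times> (nat \<Rightarrow> bit) \<times> nat \<times> nat \<Rightarrow> (edge \<Rightarrow> (nat \<Rightarrow> bit))" where
  "Y_W c W \<omega> = (\<lambda>e. if e \<in> W then edge_msg c \<omega> e else (\<lambda>_. 0))"

definition M_S :: "(nat \<Rightarrow> bit) \<times> (nat \<Rightarrow> bit) \<times> nat \<times> nat \<Rightarrow> (nat \<Rightarrow> bit) \<times> (nat \<Rightarrow> bit)" where
  "M_S \<omega> = (fst \<omega>, fst (snd \<omega>))"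

definition prob_c :: "code \<Rightarrow> (((nat \<Rightarrow> bit) \<times> (nat \<Rightarrow> bit) \<times> nat \<times> nat) \<Rightarrow> bool) \<Rightarrow> real" where
  "prob_c c P = real (card {\<omega> \<in> omega c. P \<omega>}) / real (card (omega c))"

text \<open>I(Y_W; M_S) = 0, i.e. Y_W and M_S are independent random variables.\<close>
definition zero_leakage :: "code \<Rightarrow> edge set \<Rightarrow> bool" where
  "zero_leakage c W \<longleftrightarrow>
     (\<forall>y m. prob_c c (\<lambda>\<omega>. Y_W c W \<omega> = y \<and> M_S \<omega> = m)
            = prob_c c (\<lambda>\<omega>. Y_W c W \<omega> = y) * prob_c c (\<lambda>\<omega>. M_S \<omega> = m))"

definition well_formed_code :: "code \<Rightarrow> bool" where
  "well_formed_code c \<longleftrightarrow>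
     len_n c \<ge> 1 \<and>
     finite (keys1 c) \<and> keys1 c \<noteq> {} \<and> finite (keys2 c) \<and> keys2 c \<noteq> {} \<and>
     (\<forall>m \<in> vecs (len_l c). \<forall>k \<in> keys1 c.
        enc1 c m k \<in> vecs (len_n c) \<and> enc2 c m k \<in> vecs (len_n c)) \<and>
     (\<forall>m \<in> vecs (len_l c). \<forall>k \<in> keys2 c.
        enc3 c m k \<in> vecs (len_n c) \<and> enc4 c m k \<in> vecs (len_n c)) \<and>
     (\<forall>y1 \<in> vecs (len_n c). \<forall>y2 \<in> vecs (len_n c). \<forall>y3 \<in> vecs (len_n c).
        enc5 c y1 y2 y3 \<in> vecs (len_n c)) \<and>
     (\<forall>y4 \<in> vecs (len_n c). \<forall>y5 \<in> vecs (len_n c). dec c y4 y5 \<in> vecs (len_l c))"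

definition admissible :: "nat \<Rightarrow> code \<Rightarrow> bool" where
  "admissible r c \<longleftrightarrow>
     well_formed_code c \<and>
     (\<forall>\<omega> \<in> omega c. dec c (edge_msg c \<omega> E4) (edge_msg c \<omega> E5) = (\<lambda>i. fst \<omega> i + fst (snd \<omega>) i)) \<and>
     (\<forall>W :: edge set. card W \<le> r \<longrightarrow> zero_leakage c W)"

definition rate :: "code \<Rightarrow> real" where
  "rate c = real (len_l c) / real (len_n c)"

definition achievable :: "nat \<Rightarrow> real \<Rightarrow> bool" where
  "achievable r R \<longleftrightarrow> (\<forall>\<epsilon>>0. \<exists>c. admissible r c \<and> rate c > R - \<epsilon>)"

definition secure_capacity :: "nat \<Rightarrow> real" where
  "secure_capacity r = Sup {R. achievable r R}"

end

(* Converse: with m2 and both keys fixed, the symbol on E4 does not depend on m1, yet the sink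
   recovers m1 from E4 and E5; so m1 is determined by the n symbols on E5, giving 2^l <= 2^n.
   Achievability: sigma_i sends a key bit k_i on one edge and m_i + k_i on the other, v forwards
   the sum m1 + k2 of its inputs, and rho adds m2 + k2. Every edge carries one message bit masked
   by one uniform key bit, so toggling that key by that message bit is a bijection of the keys
   turning the observation under any messages into the observation under the zero messages.
   Hence each observation arises from equally many keys whatever the messages, which for uniform
   keys is independence. *)

theory Submission
  imports Defs "HOL-Probability.Product_PMF"
begin

lemma UNIV_bit: "(UNIV :: bit set) = {0, 1}"
  using bit.exhaust by auto

lemma UNIV_edge: "(UNIV :: edge set) = {E1, E2, E3, E4, E5}"
  using edge.exhaust by auto

lemma finite_edge_set: "finite (W :: edge set)"
  by (rule finite_subset[OF subset_UNIV]) (simp add: UNIV_edge)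

lemma vecs_eq_PiE_dflt: "vecs n = PiE_dflt {..<n} 0 (\<lambda>_. UNIV)"
  by (auto simp: vecs_def PiE_dflt_def)

lemma finite_vecs: "finite (vecs n)"
  unfolding vecs_eq_PiE_dflt by (rule finite_PiE_dflt) (simp_all add: UNIV_bit)

lemma card_vecs: "card (vecs n) = 2 ^ n"
  unfolding vecs_eq_PiE_dflt by (subst card_PiE_dflt) (simp_all add: UNIV_bit numeral_2_eq_2)

lemma zero_in_vecs: "(\<lambda>_. 0) \<in> vecs n"
  by (simp add: vecs_def)

lemma admissible_len_l_le_len_n:
  assumes "admissible r c"
  shows "len_l c \<le> len_n c"
proof -
  have wf: "well_formed_code c"
    and correct: "\<And>\<omega>. \<omega> \<in> omega c \<Longrightarrow>
      dec c (edge_msg c \<omega> E4) (edge_msg c \<omega> E5) = (\<lambda>i. fst \<omega> i + fst (snd \<omega>) i)"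
    using assms unfolding admissible_def by blast+
  obtain k1 k2 where k1: "k1 \<in> keys1 c" and k2: "k2 \<in> keys2 c"
    using wf unfolding well_formed_code_def by blast
  define zero :: "nat \<Rightarrow> bit" where "zero = (\<lambda>_. 0)"
  define on_E5 where "on_E5 m = edge_msg c (m, zero, k1, k2) E5" for m
  have decodes: "dec c (edge_msg c (m, zero, k1, k2) E4) (on_E5 m) = m"
    if "m \<in> vecs (len_l c)" for m
  proof -
    have \<omega>: "(m, zero, k1, k2) \<in> omega c"
      using that k1 k2 zero_in_vecs by (simp add: omega_def zero_def)
    show ?thesis
      using correct[OF \<omega>] by (simp add: on_E5_def zero_def del: add_bit_eq_xor)
  qed
  have "inj_on on_E5 (vecs (len_l c))"
    by (rule inj_onI) (metis decodes edge_msg.simps(4))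
  moreover have "on_E5 ` vecs (len_l c) \<subseteq> vecs (len_n c)"
    using wf k1 k2 zero_in_vecs unfolding well_formed_code_def on_E5_def zero_def by auto
  ultimately have "card (vecs (len_l c)) \<le> card (vecs (len_n c))"
    using card_inj_on_le finite_vecs by blast
  then show ?thesis
    by (simp add: card_vecs)
qed

lemma admissible_rate_le_1: "admissible r c \<Longrightarrow> rate c \<le> 1"
  using admissible_len_l_le_len_n[of r c] by (cases "len_n c = 0") (simp_all add: rate_def divide_le_eq_1)

lemma achievable_le_1:
  assumes "achievable r R"
  shows "R \<le> 1"
proof (rule ccontr)
  assume "\<not> R \<le> 1"
  then have "R - 1 > 0"
    by simp
  then obtain c where "admissible r c" "rate c > R - (R - 1)"
    using assms unfolding achievable_def by blast
  then show False
    using admissible_rate_le_1 by fastforce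
qed

lemma card_omega_Collect:
  assumes "finite (keys1 c)" "finite (keys2 c)"
  shows "card {\<omega> \<in> omega c. P \<omega>} =
    (\<Sum>m \<in> vecs (len_l c) \<times> vecs (len_l c).
       card {k \<in> keys1 c \<times> keys2 c. P (fst m, snd m, k)})"
proof -
  let ?A = "vecs (len_l c) \<times> vecs (len_l c)" and ?K = "keys1 c \<times> keys2 c"
  define reassoc :: "((nat \<Rightarrow> bit) \<times> (nat \<Rightarrow> bit)) \<times> nat \<times> nat \<Rightarrow> _"
    where "reassoc = (\<lambda>(m, k). (fst m, snd m, k))"
  have "{\<omega> \<in> omega c. P \<omega>} = reassoc ` (SIGMA m:?A. {k \<in> ?K. P (fst m, snd m, k)})"
    by (force simp: omega_def reassoc_def image_iff)
  moreover have "inj_on reassoc (SIGMA m:?A. {k \<in> ?K. P (fst m, snd m, k)})"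
    by (rule inj_onI) (auto simp: reassoc_def prod_eq_iff)
  ultimately show ?thesis
    using assms finite_vecs by (simp add: card_image)
qed

lemma zero_leakage_if_key_count_invariant:
  assumes "finite (keys1 c)" "finite (keys2 c)"
    and invariant: "\<And>m m' y. m \<in> vecs (len_l c) \<times> vecs (len_l c) \<Longrightarrow>
      m' \<in> vecs (len_l c) \<times> vecs (len_l c) \<Longrightarrow>
      card {k \<in> keys1 c \<times> keys2 c. Y_W c W (fst m, snd m, k) = y} =
      card {k \<in> keys1 c \<times> keys2 c. Y_W c W (fst m', snd m', k) = y}"
  shows "zero_leakage c W"
proof -
  let ?A = "vecs (len_l c) \<times> vecs (len_l c)" and ?K = "keys1 c \<times> keys2 c"
  define m0 :: "(nat \<Rightarrow> bit) \<times> (nat \<Rightarrow> bit)" where "m0 = (\<lambda>_. 0, \<lambda>_. 0)"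
  define N where "N y = card {k \<in> ?K. Y_W c W (fst m0, snd m0, k) = y}" for y
  have count: "card {k \<in> ?K. Y_W c W (m1, m2, k) = y} = N y"
    if "m1 \<in> vecs (len_l c)" "m2 \<in> vecs (len_l c)" for m1 m2 y
    using invariant[of "(m1, m2)" m0] that zero_in_vecs by (simp add: N_def m0_def)
  have joint: "card {\<omega> \<in> omega c. Y_W c W \<omega> = y \<and> M_S \<omega> = m} = (if m \<in> ?A then N y else 0)"
    for y m
  proof -
    have "card {\<omega> \<in> omega c. Y_W c W \<omega> = y \<and> M_S \<omega> = m} =
        (\<Sum>m' \<in> ?A. if m' = m then N y else 0)"
      unfolding card_omega_Collect[OF assms(1,2)] by (rule sum.cong) (auto simp: M_S_def count)
    also have "\<dots> = (if m \<in> ?A then N y else 0)"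
      using finite_vecs by simp
    finally show ?thesis .
  qed
  have observation: "card {\<omega> \<in> omega c. Y_W c W \<omega> = y} = card ?A * N y" for y
  proof -
    have "card {\<omega> \<in> omega c. Y_W c W \<omega> = y} = (\<Sum>m \<in> ?A. N y)"
      unfolding card_omega_Collect[OF assms(1,2)] by (rule sum.cong) (auto simp: count)
    then show ?thesis
      by simp
  qed
  have message: "card {\<omega> \<in> omega c. M_S \<omega> = m} = (if m \<in> ?A then card ?K else 0)" for m
  proof -
    have "card {\<omega> \<in> omega c. M_S \<omega> = m} = (\<Sum>m' \<in> ?A. if m' = m then card ?K else 0)"
      unfolding card_omega_Collect[OF assms(1,2)] by (rule sum.cong) (auto simp: M_S_def)
    then show ?thesis
      using finite_vecs by simp
  qed
  have total: "card (omega c) = card ?A * card ?K"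
    by (simp add: omega_def card_cartesian_product)
  have "card ?A > 0"
    using finite_vecs zero_in_vecs by (auto simp: card_gt_0_iff)
  then show ?thesis
    unfolding zero_leakage_def prob_c_def by (simp add: joint observation message total)
qed

lemma Y_W_cong:
  assumes "\<And>e. e \<in> W \<Longrightarrow> edge_msg c \<omega> e = edge_msg c \<omega>' e"
  shows "Y_W c W \<omega> = Y_W c W \<omega>'"
  using assms by (simp add: Y_W_def fun_eq_iff)

definition key_bit :: "nat \<Rightarrow> bit" where
  "key_bit k = (if k = 0 then 0 else 1)"

definition flip_key :: "bit \<Rightarrow> nat \<Rightarrow> nat" where
  "flip_key b k = (if b = 0 then k else if k = 0 then 1 else 0)"

definition bitvec :: "bit \<Rightarrow> nat \<Rightarrow> bit" where
  "bitvec b i = (if i = 0 then b else 0)"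

lemma flip_key_0: "flip_key 0 k = k"
  by (simp add: flip_key_def)

lemma key_bit_flip_key: "key_bit (flip_key b k) = b + key_bit k"
  by (cases b) (simp_all add: key_bit_def flip_key_def)

lemma bij_betw_flip_key: "bij_betw (flip_key b) {0, 1} {0, 1}"
  by (cases b) (auto simp: bij_betw_def inj_on_def flip_key_def)

lemma bitvec_at_0: "bitvec b 0 = b"
  by (simp add: bitvec_def)

lemma bitvec_in_vecs: "bitvec b \<in> vecs (Suc n)"
  by (simp add: bitvec_def vecs_def)

lemma vecs_1: "vecs 1 = range bitvec"
proof (intro equalityI subsetI)
  fix x assume "x \<in> vecs 1"
  then have "x = bitvec (x 0)"
    by (auto simp: vecs_def bitvec_def fun_eq_iff)
  then show "x \<in> range bitvec" by blast
qed (auto simp: bitvec_in_vecs[of _ 0])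

definition pad_code :: code where
  "pad_code = \<lparr>len_l = 1, len_n = 1, keys1 = {0, 1}, keys2 = {0, 1},
     enc1 = (\<lambda>m k. bitvec (key_bit k)), enc2 = (\<lambda>m k. bitvec (m 0 + key_bit k)),
     enc3 = (\<lambda>m k. bitvec (key_bit k)), enc4 = (\<lambda>m k. bitvec (m 0 + key_bit k)),
     enc5 = (\<lambda>y1 y2 y3. bitvec (y1 0 + y2 0 + y3 0)),
     dec = (\<lambda>y4 y5. bitvec (y4 0 + y5 0))\<rparr>"

lemma keys_pad_code: "keys1 pad_code = {0, 1}" "keys2 pad_code = {0, 1}"
  by (simp_all add: pad_code_def)

lemma well_formed_pad_code: "well_formed_code pad_code"
  by (simp add: well_formed_code_def pad_code_def bitvec_in_vecs del: add_bit_eq_xor)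

lemma pad_code_decodes:
  assumes "\<omega> \<in> omega pad_code"
  shows "dec pad_code (edge_msg pad_code \<omega> E4) (edge_msg pad_code \<omega> E5) =
    (\<lambda>i. fst \<omega> i + fst (snd \<omega>) i)"
proof -
  obtain b1 b2 k1 k2 where \<omega>: "\<omega> = (bitvec b1, bitvec b2, k1, k2)"
    using assms unfolding omega_def pad_code_def code.simps vecs_1 by auto
  have "b2 + key_bit k2 + (key_bit k1 + (b1 + key_bit k1) + key_bit k2) = b1 + b2"
    by (cases b1; cases b2; cases "key_bit k1"; cases "key_bit k2") simp_all
  then show ?thesis
    by (simp add: \<omega> pad_code_def bitvec_def fun_eq_iff del: add_bit_eq_xor)
qed

lemma edge_msg_pad_code_shift:
  "\<exists>s t. \<forall>k1 k2. edge_msg pad_code (m1, m2, k1, k2) e =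
     edge_msg pad_code (\<lambda>_. 0, \<lambda>_. 0, flip_key s k1, flip_key t k2) e"
proof (cases e)
  case E1
  show ?thesis
    by (rule exI[of _ 0], rule exI[of _ 0]) (simp add: E1 pad_code_def flip_key_0)
next
  case E2
  show ?thesis
    by (rule exI[of _ "m1 0"], rule exI[of _ 0]) (simp add: E2 pad_code_def key_bit_flip_key)
next
  case E3
  show ?thesis
    by (rule exI[of _ 0], rule exI[of _ 0]) (simp add: E3 pad_code_def flip_key_0)
next
  case E4
  show ?thesis
    by (rule exI[of _ 0], rule exI[of _ "m2 0"]) (simp add: E4 pad_code_def key_bit_flip_key)
next
  case E5
  have "key_bit k1 + (m1 0 + key_bit k1) + key_bit k2 =
      key_bit k1 + (0 + key_bit k1) + (m1 0 + key_bit k2)" for k1 k2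
    by (cases "m1 0"; cases "key_bit k1"; cases "key_bit k2") simp_all
  then have "\<forall>k1 k2. edge_msg pad_code (m1, m2, k1, k2) e =
      edge_msg pad_code (\<lambda>_. 0, \<lambda>_. 0, flip_key 0 k1, flip_key (m1 0) k2) e"
    by (simp add: E5 pad_code_def key_bit_flip_key bitvec_at_0 del: add_bit_eq_xor)
  then show ?thesis
    by blast
qed

lemma Y_W_pad_code_shift:
  assumes "card W \<le> 1"
  shows "\<exists>s t. \<forall>k1 k2. Y_W pad_code W (m1, m2, k1, k2) =
     Y_W pad_code W (\<lambda>_. 0, \<lambda>_. 0, flip_key s k1, flip_key t k2)"
proof -
  obtain e where W: "W \<subseteq> {e}"
  proof (cases "W = {}")
    case False
    then obtain e where "e \<in> W"
      by blast
    moreover have "\<forall>a \<in> W. \<forall>b \<in> W. a = b"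
      using assms card_le_Suc0_iff_eq[OF finite_edge_set[of W]] by simp
    ultimately show ?thesis
      using that by blast
  qed blast
  obtain s t where shift: "\<forall>k1 k2. edge_msg pad_code (m1, m2, k1, k2) e =
      edge_msg pad_code (\<lambda>_. 0, \<lambda>_. 0, flip_key s k1, flip_key t k2) e"
    using edge_msg_pad_code_shift by blast
  have "Y_W pad_code W (m1, m2, k1, k2) =
      Y_W pad_code W (\<lambda>_. 0, \<lambda>_. 0, flip_key s k1, flip_key t k2)" for k1 k2
    by (rule Y_W_cong) (use W shift in blast)
  then show ?thesis
    by blast
qed

lemma key_count_pad_code:
  assumes "card W \<le> 1"
  shows "card {k \<in> {0, 1} \<times> {0, 1}. Y_W pad_code W (m1, m2, k) = y} =
    card {k \<in> {0, 1} \<times> {0, 1}. Y_W pad_code W (\<lambda>_. 0, \<lambda>_. 0, k) = y}"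
proof -
  obtain s t where "\<forall>k1 k2. Y_W pad_code W (m1, m2, k1, k2) =
      Y_W pad_code W (\<lambda>_. 0, \<lambda>_. 0, flip_key s k1, flip_key t k2)"
    using Y_W_pad_code_shift[OF assms] by blast
  then have shift: "Y_W pad_code W (m1, m2, k) =
      Y_W pad_code W (\<lambda>_. 0, \<lambda>_. 0, map_prod (flip_key s) (flip_key t) k)" for k
    by (cases k) (simp only: map_prod_simp)
  have "bij_betw (map_prod (flip_key s) (flip_key t))
      {k \<in> {0, 1} \<times> {0, 1}. Y_W pad_code W (m1, m2, k) = y}
      {k \<in> {0, 1} \<times> {0, 1}. Y_W pad_code W (\<lambda>_. 0, \<lambda>_. 0, k) = y}"
    by (rule bij_betw_Collect[OF bij_betw_map_prod[OF bij_betw_flip_key bij_betw_flip_key]])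
      (simp only: shift)
  then show ?thesis
    by (rule bij_betw_same_card)
qed

lemma zero_leakage_pad_code:
  assumes "card W \<le> 1"
  shows "zero_leakage pad_code W"
proof (rule zero_leakage_if_key_count_invariant)
  fix m m' :: "(nat \<Rightarrow> bit) \<times> (nat \<Rightarrow> bit)" and y
  show "card {k \<in> keys1 pad_code \<times> keys2 pad_code. Y_W pad_code W (fst m, snd m, k) = y} =
      card {k \<in> keys1 pad_code \<times> keys2 pad_code. Y_W pad_code W (fst m', snd m', k) = y}"
    using key_count_pad_code[OF assms, of "fst m" "snd m" y]
      key_count_pad_code[OF assms, of "fst m'" "snd m'" y]
    by (simp only: keys_pad_code)
qed (simp_all add: keys_pad_code)

lemma admissible_pad_code: "admissible 1 pad_code"
  unfolding admissible_def using well_formed_pad_code pad_code_decodes zero_leakage_pad_code by blast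

lemma edge_in_step_without: "e \<notin> C \<Longrightarrow> (tl_e e, hd_e e) \<in> step_without C"
  by (auto simp: step_without_def)

lemma mincut_le_card: "(u, w) \<notin> (step_without C)\<^sup>* \<Longrightarrow> mincut u w \<le> card C"
  unfolding mincut_def by (rule Least_le) blast

lemma mincut_pos:
  assumes "u \<noteq> w" and "(u, w) \<in> (step_without {})\<^sup>*"
  shows "0 < mincut u w"
proof -
  let ?separates = "\<lambda>k. \<exists>C. card C = k \<and> (u, w) \<notin> (step_without C)\<^sup>*"
  have "step_without UNIV = {}"
    by (simp add: step_without_def)
  then have "?separates (card (UNIV :: edge set))"
    using assms(1) by auto
  then have "?separates (mincut u w)"
    unfolding mincut_def by (rule LeastI)
  then obtain C where "card C = mincut u w" and "(u, w) \<notin> (step_without C)\<^sup>*"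
    by blast
  with assms(2) finite_edge_set[of C] show ?thesis
    by (metis card_0_eq gr0I)
qed

lemma Sigma1_Rho_disconnected_without_E5: "(Sigma1, Rho) \<notin> (step_without {E5})\<^sup>*"
proof
  have "y \<in> {Sigma1, V}" if "(Sigma1, y) \<in> (step_without {E5})\<^sup>*" for y
    using that
  proof (induction rule: rtrancl_induct)
    case (step y z)
    then obtain e where "e \<noteq> E5" "y = tl_e e" "z = hd_e e"
      by (auto simp: step_without_def)
    with step.IH show ?case
      by (cases e) auto
  qed simp
  moreover assume "(Sigma1, Rho) \<in> (step_without {E5})\<^sup>*"
  ultimately show False
    by blast
qed

lemma mincut_Sigma1_Rho: "mincut Sigma1 Rho = 1"
proof (rule antisym)
  show "mincut Sigma1 Rho \<le> 1"
    using mincut_le_card[OF Sigma1_Rho_disconnected_without_E5] by simp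
  have "(Sigma1, V) \<in> step_without {}" "(V, Rho) \<in> step_without {}"
    using edge_in_step_without[of E1 "{}"] edge_in_step_without[of E5 "{}"] by simp_all
  then have "(Sigma1, Rho) \<in> (step_without {})\<^sup>*"
    by (meson converse_rtrancl_into_rtrancl r_into_rtrancl)
  then show "1 \<le> mincut Sigma1 Rho"
    using mincut_pos[of Sigma1 Rho] by simp
qed

lemma mincut_Sigma2_Rho_pos: "0 < mincut Sigma2 Rho"
  using mincut_pos[of Sigma2 Rho] edge_in_step_without[of E4 "{}"] by (simp add: r_into_rtrancl)

theorem mainTheorem5:
  shows "secure_capacity 1 = 1
       \<and> (\<forall>R. achievable 1 R \<longrightarrow> R \<le> 1) \<and> achievable 1 1
       \<and> secure_capacity 1 = real (min (mincut Sigma1 Rho) (mincut Sigma2 Rho))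
       \<and> (\<exists>c. admissible 1 c \<and> len_l c = 1 \<and> len_n c = 1)"
proof -
  have pad_code_lengths: "len_l pad_code = 1" "len_n pad_code = 1"
    by (simp_all add: pad_code_def)
  have achievable: "achievable 1 1"
    using admissible_pad_code by (auto simp: achievable_def rate_def pad_code_lengths)
  have upper: "\<forall>R. achievable 1 R \<longrightarrow> R \<le> 1"
    using achievable_le_1 by blast
  have capacity: "secure_capacity 1 = 1"
    unfolding secure_capacity_def by (rule cSup_eq_maximum) (use achievable upper in auto)
  have "min (mincut Sigma1 Rho) (mincut Sigma2 Rho) = 1"
    using mincut_Sigma1_Rho mincut_Sigma2_Rho_pos by simp
  with capacity upper achievable admissible_pad_code pad_code_lengths show ?thesis
    by auto
qed

end
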